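(* Let $M$ be an $R$-module. (a) If $M$ is a Hopfian comultiplication $R$-module satisfying the dual of Property $\mathcal{A}$, then $M$ satisfies Property $\mathcal{A}$. (b) If $M$ is a co-Hopfian multiplication $R$-module satisfying Property $\mathcal{A}$, then $M$ satisfies the dual of Property $\mathcal{A}$.
   Context: All rings are commutative with identity. For an $R$-module $M$, $W_R(M)=\{r\in R : rM\neq M\}$ and $Z_R(M)=\{r\in R: rm=0 \text{ for some } 0\neq m\in M\}$. An $R$-module $M$ satisfies the dual of Property $\mathcal{A}$ if for every finitely generated ideal $I$ of $R$ with $I\subseteq W_R(M)$ we have $IM\neq M$. $M$ satisfies Property $\mathcal{A}$ if for every finitely generated ideal $I$ of $R$ with $I\subseteq Z_R(M)$ we have $(0:_M I)\neq 0$. $M$ is Hopfian (resp. co-Hopfian) if every surjective (resp. injective) endomorphism of $M$ is an isomorphism. $M$ is a multiplication module if every submodule $N$ equals $IM$ for some ideal $I$; $M$ is a comultiplication module if every submodule $N$ equals $(0:_M I)$ for some ideal $I$ of $R$. *)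

theory Defs
  imports Complex_Main
begin

definition ideal_of :: "'a::comm_ring_1 set \<Rightarrow> bool" where
  "ideal_of I \<longleftrightarrow> module.subspace ((*) :: 'a \<Rightarrow> 'a \<Rightarrow> 'a) I"

definition fg_ideal :: "'a::comm_ring_1 set \<Rightarrow> bool" where
  "fg_ideal I \<longleftrightarrow> (\<exists>F. finite F \<and> I = module.span ((*) :: 'a \<Rightarrow> 'a \<Rightarrow> 'a) F)"

definition W_set :: "('a::comm_ring_1 \<Rightarrow> 'b::ab_group_add \<Rightarrow> 'b) \<Rightarrow> 'a set" where
  "W_set sc = {r. range (sc r) \<noteq> UNIV}"

definition Z_set :: "('a::comm_ring_1 \<Rightarrow> 'b::ab_group_add \<Rightarrow> 'b) \<Rightarrow> 'a set" where
  "Z_set sc = {r. \<exists>m. m \<noteq> 0 \<and> sc r m = 0}"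

definition ideal_mult :: "('a::comm_ring_1 \<Rightarrow> 'b::ab_group_add \<Rightarrow> 'b) \<Rightarrow> 'a set \<Rightarrow> 'b set" where
  "ideal_mult sc I = module.span sc {sc r m | r m. r \<in> I}"

definition annih_sub :: "('a::comm_ring_1 \<Rightarrow> 'b::ab_group_add \<Rightarrow> 'b) \<Rightarrow> 'a set \<Rightarrow> 'b set" where
  "annih_sub sc I = {m. \<forall>r\<in>I. sc r m = 0}"

definition dual_property_A :: "('a::comm_ring_1 \<Rightarrow> 'b::ab_group_add \<Rightarrow> 'b) \<Rightarrow> bool" where
  "dual_property_A sc \<longleftrightarrow>
     (\<forall>I. fg_ideal I \<and> I \<subseteq> W_set sc \<longrightarrow> ideal_mult sc I \<noteq> UNIV)"

definition property_A :: "('a::comm_ring_1 \<Rightarrow> 'b::ab_group_add \<Rightarrow> 'b) \<Rightarrow> bool" where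
  "property_A sc \<longleftrightarrow>
     (\<forall>I. fg_ideal I \<and> I \<subseteq> Z_set sc \<longrightarrow> annih_sub sc I \<noteq> {0})"

definition hopfian :: "('a::comm_ring_1 \<Rightarrow> 'b::ab_group_add \<Rightarrow> 'b) \<Rightarrow> bool" where
  "hopfian sc \<longleftrightarrow> (\<forall>f. module_hom sc sc f \<and> surj f \<longrightarrow> bij f)"

definition cohopfian :: "('a::comm_ring_1 \<Rightarrow> 'b::ab_group_add \<Rightarrow> 'b) \<Rightarrow> bool" where
  "cohopfian sc \<longleftrightarrow> (\<forall>f. module_hom sc sc f \<and> inj f \<longrightarrow> bij f)"

definition multiplication_module :: "('a::comm_ring_1 \<Rightarrow> 'b::ab_group_add \<Rightarrow> 'b) \<Rightarrow> bool" where
  "multiplication_module sc \<longleftrightarrow>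
     (\<forall>N. module.subspace sc N \<longrightarrow> (\<exists>I. ideal_of I \<and> N = ideal_mult sc I))"

definition comultiplication_module :: "('a::comm_ring_1 \<Rightarrow> 'b::ab_group_add \<Rightarrow> 'b) \<Rightarrow> bool" where
  "comultiplication_module sc \<longleftrightarrow>
     (\<forall>N. module.subspace sc N \<longrightarrow> (\<exists>I. ideal_of I \<and> N = annih_sub sc I))"

end

theory Submission
  imports Defs
begin

text \<open>A Hopfian module has \<open>Z(M) \<subseteq> W(M)\<close>, because multiplication by
  an element outside \<open>W(M)\<close> is a surjective, hence bijective, endomorphism; dually a co-Hopfian
  module has \<open>W(M) \<subseteq> Z(M)\<close>. Moreover, since \<open>JM \<subseteq> (0 :\<^sub>M I)\<close> and \<open>IM \<subseteq> (0 :\<^sub>M J)\<close> both say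
  \<open>IJM = 0\<close>, writing \<open>IM = (0 :\<^sub>M J)\<close> in a comultiplication module shows that \<open>(0 :\<^sub>M I) = 0\<close>
  forces \<open>JM = 0\<close>, i.e. \<open>IM = M\<close>; writing \<open>(0 :\<^sub>M I) = JM\<close> in a multiplication module shows
  that \<open>IM = M\<close> forces \<open>(0 :\<^sub>M I) = 0\<close>. Each Property then transfers to the other along the
  inclusion of the sets of ideals it quantifies over.\<close>

context module
begin

lemma inj_scale_iff: "inj (scale r) \<longleftrightarrow> r \<notin> Z_set scale"
proof -
  interpret module_hom scale scale "scale r"
    by (rule module_hom_scale_self)
  show ?thesis
    by (auto simp: inj_iff_eq_0 Z_set_def)
qed

lemma Z_set_subset_W_set_if_hopfian:
  assumes "hopfian scale"
  shows "Z_set scale \<subseteq> W_set scale"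
proof
  fix r assume "r \<in> Z_set scale"
  show "r \<in> W_set scale"
  proof (rule ccontr)
    assume "r \<notin> W_set scale"
    then have "surj (scale r)"
      by (simp add: W_set_def)
    with assms have "bij (scale r)"
      by (simp add: hopfian_def)
    with \<open>r \<in> Z_set scale\<close> show False
      by (metis bij_is_inj inj_scale_iff)
  qed
qed

lemma W_set_subset_Z_set_if_cohopfian:
  assumes "cohopfian scale"
  shows "W_set scale \<subseteq> Z_set scale"
proof
  fix r assume "r \<in> W_set scale"
  show "r \<in> Z_set scale"
  proof (rule ccontr)
    assume "r \<notin> Z_set scale"
    with assms have "bij (scale r)"
      by (simp add: cohopfian_def inj_scale_iff)
    with \<open>r \<in> W_set scale\<close> show False
      by (simp add: bij_is_surj W_set_def)
  qed
qed

lemma subspace_ideal_mult: "subspace (ideal_mult scale I)"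
  by (simp add: ideal_mult_def)

lemma subspace_annih_sub: "subspace (annih_sub scale I)"
  unfolding subspace_def annih_sub_def
  by (auto simp: scale_right_distrib) (metis mult.commute scale_scale scale_zero_right)

lemma ideal_mult_subset_iff:
  assumes "subspace N"
  shows "ideal_mult scale I \<subseteq> N \<longleftrightarrow> (\<forall>r\<in>I. \<forall>m. scale r m \<in> N)"
proof
  assume "ideal_mult scale I \<subseteq> N"
  then show "\<forall>r\<in>I. \<forall>m. scale r m \<in> N"
    unfolding ideal_mult_def by (auto dest: subsetD intro: span_base)
next
  assume "\<forall>r\<in>I. \<forall>m. scale r m \<in> N"
  then show "ideal_mult scale I \<subseteq> N"
    unfolding ideal_mult_def by (intro span_minimal assms) blast
qed

lemma ideal_mult_subset_annih_sub_iff: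
  "ideal_mult scale J \<subseteq> annih_sub scale I \<longleftrightarrow> (\<forall>i\<in>I. \<forall>j\<in>J. \<forall>m. scale (i * j) m = 0)"
proof -
  have "ideal_mult scale J \<subseteq> annih_sub scale I \<longleftrightarrow> (\<forall>j\<in>J. \<forall>m. scale j m \<in> annih_sub scale I)"
    by (rule ideal_mult_subset_iff[OF subspace_annih_sub])
  then show ?thesis
    by (auto simp: annih_sub_def)
qed

lemma ideal_mult_subset_annih_sub_commute:
  "ideal_mult scale J \<subseteq> annih_sub scale I \<longleftrightarrow> ideal_mult scale I \<subseteq> annih_sub scale J"
  unfolding ideal_mult_subset_annih_sub_iff by (metis mult.commute)

lemma annih_sub_eq_UNIV_iff: "annih_sub scale J = UNIV \<longleftrightarrow> ideal_mult scale J \<subseteq> {0}"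
  by (auto simp: ideal_mult_subset_iff annih_sub_def)

lemma ideal_mult_eq_UNIV_if_annih_sub_eq_0:
  assumes "comultiplication_module scale" and "annih_sub scale I = {0}"
  shows "ideal_mult scale I = UNIV"
proof -
  obtain J where J: "ideal_mult scale I = annih_sub scale J"
    using assms(1) subspace_ideal_mult unfolding comultiplication_module_def by blast
  then have "ideal_mult scale J \<subseteq> {0}"
    using ideal_mult_subset_annih_sub_commute[of J I] assms(2) by simp
  then show ?thesis
    by (simp add: J annih_sub_eq_UNIV_iff)
qed

lemma annih_sub_eq_0_if_ideal_mult_eq_UNIV:
  assumes "multiplication_module scale" and "ideal_mult scale I = UNIV"
  shows "annih_sub scale I = {0}"
proof -
  obtain J where J: "annih_sub scale I = ideal_mult scale J"
    using assms(1) subspace_annih_sub unfolding multiplication_module_def by blast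
  then have "annih_sub scale J = UNIV"
    using ideal_mult_subset_annih_sub_commute[of J I] assms(2) by (simp add: top_unique)
  then have "ideal_mult scale J \<subseteq> {0}"
    by (simp add: annih_sub_eq_UNIV_iff)
  moreover have "0 \<in> annih_sub scale I"
    by (simp add: annih_sub_def)
  ultimately show ?thesis
    using J by auto
qed

end

theorem proposition2p8:
  fixes sc :: "'a::comm_ring_1 \<Rightarrow> 'b::ab_group_add \<Rightarrow> 'b"
  assumes "module sc"
  shows "(hopfian sc \<and> comultiplication_module sc \<and> dual_property_A sc \<longrightarrow> property_A sc)
       \<and> (cohopfian sc \<and> multiplication_module sc \<and> property_A sc \<longrightarrow> dual_property_A sc)"
proof (intro conjI impI)
  assume "hopfian sc \<and> comultiplication_module sc \<and> dual_property_A sc"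
  then show "property_A sc"
    using module.Z_set_subset_W_set_if_hopfian[OF assms]
      module.ideal_mult_eq_UNIV_if_annih_sub_eq_0[OF assms]
    unfolding property_A_def dual_property_A_def by blast
next
  assume "cohopfian sc \<and> multiplication_module sc \<and> property_A sc"
  then show "dual_property_A sc"
    using module.W_set_subset_Z_set_if_cohopfian[OF assms]
      module.annih_sub_eq_0_if_ideal_mult_eq_UNIV[OF assms]
    unfolding property_A_def dual_property_A_def by blast
qed

end
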